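(* In the setting below, fix $(s,a)\in\mathcal{K}$ and a policy $\pi$. Let $u^\pi=\gamma(\widehat{P}_\mathcal{K}(\cdot|s,a)-P(\cdot|s,a))\widehat{V}^\pi$ and $u^*=\gamma(\widehat{P}_\mathcal{K}(\cdot|s,a)-P(\cdot|s,a))\widehat{V}^*$. Then $$\widehat{Q}^\pi=\widetilde{Q}^\pi_{u^\pi},\quad \widehat{Q}^*=\widetilde{Q}^{\widehat{\pi}^*}_{u^*}=\widetilde{Q}^*_{u^*},\quad -\tfrac{1}{1-\gamma}\le u^\pi\le\tfrac{1}{1-\gamma},\quad -\tfrac{1}{1-\gamma}\le u^*\le\tfrac{1}{1-\gamma}.$$
   Context: $M=(\mathcal{S},\mathcal{A},P,r,\gamma)$ is a discounted MDP (finite $\mathcal{S},\mathcal{A}$, $r\in[0,1]$, $\gamma\in(0,1)$) with linear representation $P(s'|s,a)=\sum_k\phi_k(s,a)\psi_k(s')$ satisfying the anchor-state assumption: anchors $\mathcal{K}=\{(s_k,a_k)\}_{k=1}^K$, $\lambda_k^{s,a}\ge0$, $\sum_k\lambda_k^{s,a}=1$, $\phi(s,a)=\sum_k\lambda_k^{s,a}\phi(s_k,a_k)$. $\widehat{P}_\mathcal{K}(\cdot|s_k,a_k)$ is the empirical distribution of $N$ samples from $P(\cdot|s_k,a_k)$; $\widehat{P}(s'|s'',a'')=\sum_k\lambda_k^{s'',a''}\widehat{P}_\mathcal{K}(s'|s_k,a_k)$; $\widehat{M}=(\mathcal{S},\mathcal{A},\widehat{P},r,\gamma)$ with Q-functions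 $\widehat{Q}^\pi$, value functions $\widehat{V}^\pi$, optimal policy $\widehat{\pi}^*$, $\widehat{V}^*=\widehat{V}^{\widehat{\pi}^*}$, $\widehat{Q}^*=\widehat{Q}^{\widehat{\pi}^*}$. Auxiliary MDP: for $(s,a)=(s_j,a_j)\in\mathcal{K}$ and $u\in\mathbb{R}$, $\widetilde{M}_{s,a,u}=(\mathcal{S},\mathcal{A},\widetilde{P},r+u\Lambda^{s,a},\gamma)$ where $\widetilde{P}_\mathcal{K}(\cdot|s_k,a_k)=\widehat{P}_\mathcal{K}(\cdot|s_k,a_k)$ for $k\ne j$ and $\widetilde{P}_\mathcal{K}(\cdot|s_j,a_j)=P(\cdot|s,a)$, $\widetilde{P}(s'|s'',a'')=\sum_k\lambda_k^{s'',a''}\widetilde{P}_\mathcal{K}(s'|s_k,a_k)$, and $\Lambda^{s,a}\in\mathbb{R}^{\mathcal{S}\times\mathcal{A}}$ is the vector $(s'',a'')\mapsto\lambda_j^{s'',a''}$. $\widetilde{Q}^\pi_u$, $\widetilde{Q}^*_u$ denote the Q-function of $\pi$ and the optimal Q-function in $\widetilde{M}_{s,a,u}$. Here $\widehat{P}_\mathcal{K}(\cdot|s,a)V$ denotes $\sum_{s'}\widehat{P}_\mathcal{K}(s'|s,a)V(s')$. *)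

theory Defs
  imports "HOL-Analysis.Analysis"
begin

(* Finite discounted MDPs over finite types 's (states) and 'a (actions).
   A transition kernel is  P :: ('s \<times> 'a) \<Rightarrow> 's \<Rightarrow> real,  P (s,a) s' = P(s'|s,a).
   Policies are stationary (possibly randomized): pol s a = pol(a|s). *)

definition is_policy :: "('s::finite \<Rightarrow> 'a::finite \<Rightarrow> real) \<Rightarrow> bool" where
  "is_policy pol \<longleftrightarrow> (\<forall>s a. 0 \<le> pol s a) \<and> (\<forall>s. (\<Sum>a\<in>UNIV. pol s a) = 1)"

definition stoch_kernel :: "('s::finite \<times> 'a::finite \<Rightarrow> 's \<Rightarrow> real) \<Rightarrow> bool" where
  "stoch_kernel P \<longleftrightarrow> (\<forall>sa s'. 0 \<le> P sa s') \<and> (\<forall>sa. (\<Sum>s'\<in>UNIV. P sa s') = 1)"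

definition Vof :: "('s::finite \<Rightarrow> 'a::finite \<Rightarrow> real) \<Rightarrow> ('s \<times> 'a \<Rightarrow> real) \<Rightarrow> 's \<Rightarrow> real" where
  "Vof pol Q s = (\<Sum>a\<in>UNIV. pol s a * Q (s, a))"

definition step_op :: "('s::finite \<times> 'a::finite \<Rightarrow> 's \<Rightarrow> real) \<Rightarrow> real \<Rightarrow> ('s \<Rightarrow> 'a \<Rightarrow> real)
    \<Rightarrow> ('s \<times> 'a \<Rightarrow> real) \<Rightarrow> ('s \<times> 'a \<Rightarrow> real)" where
  "step_op P \<gamma> pol Q = (\<lambda>sa. \<gamma> * (\<Sum>s'\<in>UNIV. P sa s' * Vof pol Q s'))"

(* Q-function of pol in MDP (S,A,P,r,gamma): expected discounted return
   Q^pol = sum_t (gamma P^pol)^t r *)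
definition Qfun :: "('s::finite \<times> 'a::finite \<Rightarrow> 's \<Rightarrow> real) \<Rightarrow> ('s \<times> 'a \<Rightarrow> real) \<Rightarrow> real
    \<Rightarrow> ('s \<Rightarrow> 'a \<Rightarrow> real) \<Rightarrow> ('s \<times> 'a \<Rightarrow> real)" where
  "Qfun P r \<gamma> pol = (\<lambda>sa. (\<Sum>t. ((step_op P \<gamma> pol ^^ t) r) sa))"

definition Vfun :: "('s::finite \<times> 'a::finite \<Rightarrow> 's \<Rightarrow> real) \<Rightarrow> ('s \<times> 'a \<Rightarrow> real) \<Rightarrow> real
    \<Rightarrow> ('s \<Rightarrow> 'a \<Rightarrow> real) \<Rightarrow> 's \<Rightarrow> real" where
  "Vfun P r \<gamma> pol = Vof pol (Qfun P r \<gamma> pol)"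

definition optimal_policy :: "('s::finite \<times> 'a::finite \<Rightarrow> 's \<Rightarrow> real) \<Rightarrow> ('s \<times> 'a \<Rightarrow> real) \<Rightarrow> real
    \<Rightarrow> ('s \<Rightarrow> 'a \<Rightarrow> real) \<Rightarrow> bool" where
  "optimal_policy P r \<gamma> pol \<longleftrightarrow> is_policy pol \<and>
     (\<forall>pol'. is_policy pol' \<longrightarrow> (\<forall>s. Vfun P r \<gamma> pol' s \<le> Vfun P r \<gamma> pol s))"

definition Qopt :: "('s::finite \<times> 'a::finite \<Rightarrow> 's \<Rightarrow> real) \<Rightarrow> ('s \<times> 'a \<Rightarrow> real) \<Rightarrow> real
    \<Rightarrow> ('s \<times> 'a \<Rightarrow> real)" where
  "Qopt P r \<gamma> = (\<lambda>sa. (SUP pol\<in>{pol. is_policy pol}. Qfun P r \<gamma> pol sa))"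

(* empirical distribution of the N samples  smp k 0, ..., smp k (N-1)  drawn at anchor k *)
definition emp_dist :: "nat \<Rightarrow> (nat \<Rightarrow> nat \<Rightarrow> 's) \<Rightarrow> nat \<Rightarrow> 's \<Rightarrow> real" where
  "emp_dist N smp k s' = real (card {i\<in>{..<N}. smp k i = s'}) / real N"

definition interp_kernel :: "nat \<Rightarrow> ('s \<times> 'a \<Rightarrow> nat \<Rightarrow> real) \<Rightarrow> (nat \<Rightarrow> 's \<Rightarrow> real)
    \<Rightarrow> ('s \<times> 'a \<Rightarrow> 's \<Rightarrow> real)" where
  "interp_kernel K lam PK = (\<lambda>sa s'. (\<Sum>k<K. lam sa k * PK k s'))"

end

theory Submission
  imports Defs
begin

(* Replacing the j-th anchor distribution by P(.|s,a) changes the interpolated kernel by the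
   rank-one term lambda_j(s'',a'') (PhatK(.|s,a) - P(.|s,a)).  Applied to the fixed function
   Vhat^pi this term contributes the constant u lambda_j to the Bellman equation of Qhat^pi, so
   Qhat^pi solves the Bellman equation of the auxiliary MDP with reward r + u lambda_j; by the
   comparison principle (a maximum principle for the gamma-contraction) this solution is unique.
   The optimal policy of Mhat is greedy for its own Q-function; greediness depends on that
   Q-function alone, which is the same in both MDPs, and by the comparison principle a policy
   greedy for its own Q-function is optimal.  Finally Vhat lies in [0, 1/(1-gamma)], so a
   difference of two expectations of it is at most 1/(1-gamma) in size. *)
lemma weighted_avg_le:
  fixes w f :: "'b \<Rightarrow> 'c::linordered_idom"
  assumes "\<And>x. x \<in> A \<Longrightarrow> 0 \<le> w x" "sum w A = 1" "\<And>x. x \<in> A \<Longrightarrow> f x \<le> M"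
  shows "(\<Sum>x\<in>A. w x * f x) \<le> M"
proof -
  have "(\<Sum>x\<in>A. w x * f x) \<le> (\<Sum>x\<in>A. w x * M)"
    using assms by (intro sum_mono mult_left_mono) auto
  also have "\<dots> = M"
    using assms(2) by (simp add: sum_distrib_right[symmetric])
  finally show ?thesis .
qed

lemma weighted_avg_ge:
  fixes w f :: "'b \<Rightarrow> 'c::linordered_idom"
  assumes "\<And>x. x \<in> A \<Longrightarrow> 0 \<le> w x" "sum w A = 1" "\<And>x. x \<in> A \<Longrightarrow> M \<le> f x"
  shows "M \<le> (\<Sum>x\<in>A. w x * f x)"
  using weighted_avg_le[of A w "\<lambda>x. - f x" "- M"] assms by (simp add: sum_negf)

lemma is_policyD:
  assumes "is_policy pol"
  shows "0 \<le> pol s a" "(\<Sum>a\<in>UNIV. pol s a) = 1"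
  using assms unfolding is_policy_def by auto

lemma stoch_kernelD:
  assumes "stoch_kernel P"
  shows "0 \<le> P sa s'" "(\<Sum>s'\<in>UNIV. P sa s') = 1"
  using assms unfolding stoch_kernel_def by blast+

lemma Vof_le:
  "is_policy pol \<Longrightarrow> (\<And>x. Q x \<le> M) \<Longrightarrow> Vof pol Q s \<le> M"
  unfolding Vof_def by (rule weighted_avg_le) (auto dest: is_policyD)

lemma Vof_ge:
  "is_policy pol \<Longrightarrow> (\<And>x. M \<le> Q x) \<Longrightarrow> M \<le> Vof pol Q s"
  unfolding Vof_def by (rule weighted_avg_ge) (auto dest: is_policyD)

lemma Vof_mono:
  "is_policy pol \<Longrightarrow> (\<And>x. Q x \<le> Q' x) \<Longrightarrow> Vof pol Q s \<le> Vof pol Q' s"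
  unfolding Vof_def by (intro sum_mono mult_left_mono) (auto dest: is_policyD)

lemma step_op_diff:
  "step_op P \<gamma> pol (\<lambda>x. Q x - Q' x) sa = step_op P \<gamma> pol Q sa - step_op P \<gamma> pol Q' sa"
  by (simp add: step_op_def Vof_def right_diff_distrib sum_subtractf)

lemma step_op_mono:
  assumes "stoch_kernel P" "0 \<le> \<gamma>" "\<And>s. Vof pol Q s \<le> Vof pol' Q' s"
  shows "step_op P \<gamma> pol Q sa \<le> step_op P \<gamma> pol' Q' sa"
  unfolding step_op_def
  using assms by (intro mult_left_mono sum_mono) (auto dest: stoch_kernelD)

lemma step_op_le:
  assumes "stoch_kernel P" "is_policy pol" "0 \<le> \<gamma>" "\<And>x. Q x \<le> M"
  shows "step_op P \<gamma> pol Q sa \<le> \<gamma> * M"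
  unfolding step_op_def using assms
  by (intro mult_left_mono weighted_avg_le Vof_le) (auto dest: stoch_kernelD)

lemma step_op_ge:
  assumes "stoch_kernel P" "is_policy pol" "0 \<le> \<gamma>" "\<And>x. M \<le> Q x"
  shows "\<gamma> * M \<le> step_op P \<gamma> pol Q sa"
  unfolding step_op_def using assms
  by (intro mult_left_mono weighted_avg_ge Vof_ge) (auto dest: stoch_kernelD)

lemma step_op_abs_le:
  assumes "stoch_kernel P" "is_policy pol" "0 \<le> \<gamma>" "\<And>x. \<bar>Q x\<bar> \<le> M"
  shows "\<bar>step_op P \<gamma> pol Q sa\<bar> \<le> \<gamma> * M"
proof -
  have "Q x \<le> M" "- M \<le> Q x" for x
    using assms(4)[of x] by (simp_all add: abs_le_iff)
  then show ?thesis
    using step_op_le[OF assms(1-3), of Q M sa] step_op_ge[OF assms(1-3), of "- M" Q sa]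
    by (simp add: abs_le_iff)
qed

(* At a maximum point of Q - X the two inequalities give max (Q - X) \<le> \<gamma> max (Q - X). *)
lemma step_op_comparison:
  fixes P :: "'s::finite \<times> 'a::finite \<Rightarrow> 's \<Rightarrow> real"
  assumes P: "stoch_kernel P" and pol: "is_policy pol" and \<gamma>: "0 \<le> \<gamma>" "\<gamma> < 1"
    and sub: "\<And>x. Q x \<le> r x + step_op P \<gamma> pol Q x"
    and super: "\<And>x. r x + step_op P \<gamma> pol X x \<le> X x"
  shows "Q x \<le> X x"
proof -
  define D where "D = (\<lambda>x. Q x - X x)"
  define M where "M = Max (range D)"
  have D_le_M: "D y \<le> M" for y
    unfolding M_def by simp
  have "M \<in> range D"
    unfolding M_def by (intro Max_in) auto
  then obtain y where y: "D y = M" by auto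
  have "M \<le> step_op P \<gamma> pol D y"
    using sub[of y] super[of y] y unfolding D_def step_op_diff by simp
  also have "\<dots> \<le> \<gamma> * M"
    using step_op_le[OF P pol \<gamma>(1)] D_le_M by blast
  finally have "M \<le> 0"
    using \<gamma> by (simp add: mult_le_cancel_right1)
  then show ?thesis
    using D_le_M[of x] unfolding D_def by simp
qed

lemma step_op_iterate_abs_le:
  assumes "stoch_kernel P" "is_policy pol" "0 \<le> \<gamma>"
  shows "\<bar>(step_op P \<gamma> pol ^^ t) r x\<bar> \<le> \<gamma> ^ t * Max (range (\<lambda>y. \<bar>r y\<bar>))"
proof (induction t arbitrary: x)
  case 0
  then show ?case by simp
next
  case (Suc t)
  then show ?case
    using step_op_abs_le[OF assms] by (simp add: mult.assoc)
qed

lemma Qfun_Bellman: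
  fixes P :: "'s::finite \<times> 'a::finite \<Rightarrow> 's \<Rightarrow> real"
  assumes P: "stoch_kernel P" and pol: "is_policy pol" and \<gamma>: "0 \<le> \<gamma>" "\<gamma> < 1"
  shows "Qfun P r \<gamma> pol x = r x + step_op P \<gamma> pol (Qfun P r \<gamma> pol) x"
proof -
  define f where "f t = (step_op P \<gamma> pol ^^ t) r" for t
  have f_sums: "(\<lambda>t. f t y) sums Qfun P r \<gamma> pol y" for y
  proof -
    have "summable (\<lambda>t. \<gamma> ^ t * Max (range (\<lambda>y. \<bar>r y\<bar>)))"
      using \<gamma> by (intro summable_mult2 summable_geometric) auto
    then have "summable (\<lambda>t. f t y)"
      by (rule summable_comparison_test[rotated])
        (use step_op_iterate_abs_le[OF P pol \<gamma>(1)] in \<open>auto simp: f_def\<close>)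
    then show ?thesis
      unfolding Qfun_def f_def by (simp add: summable_sums)
  qed
  have "(\<lambda>t. step_op P \<gamma> pol (f t) x) sums step_op P \<gamma> pol (Qfun P r \<gamma> pol) x"
    unfolding step_op_def Vof_def by (intro sums_mult sums_sum f_sums)
  moreover have "step_op P \<gamma> pol (f t) x = f (Suc t) x" for t
    unfolding f_def by simp
  ultimately have "(\<lambda>t. f t x) sums (step_op P \<gamma> pol (Qfun P r \<gamma> pol) x + f 0 x)"
    by (simp add: sums_Suc_iff[where f = "\<lambda>t. f t x", symmetric])
  then show ?thesis
    using sums_unique2[OF f_sums[of x]] by (simp add: f_def)
qed

lemma Qfun_ge_of_subsolution:
  fixes P :: "'s::finite \<times> 'a::finite \<Rightarrow> 's \<Rightarrow> real"
  assumes "stoch_kernel P" "is_policy pol" "0 \<le> \<gamma>" "\<gamma> < 1"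
    and "\<And>x. Q x \<le> r x + step_op P \<gamma> pol Q x"
  shows "Q x \<le> Qfun P r \<gamma> pol x"
  by (rule step_op_comparison[OF assms(1-4), where r = r])
    (simp_all add: assms(5) Qfun_Bellman[OF assms(1-4), symmetric])

lemma Qfun_le_of_supersolution:
  fixes P :: "'s::finite \<times> 'a::finite \<Rightarrow> 's \<Rightarrow> real"
  assumes "stoch_kernel P" "is_policy pol" "0 \<le> \<gamma>" "\<gamma> < 1"
    and "\<And>x. r x + step_op P \<gamma> pol X x \<le> X x"
  shows "Qfun P r \<gamma> pol x \<le> X x"
  by (rule step_op_comparison[OF assms(1-4), where r = r])
    (simp_all add: assms(5) Qfun_Bellman[OF assms(1-4), symmetric])

lemma Qfun_eq_of_Bellman:
  fixes P :: "'s::finite \<times> 'a::finite \<Rightarrow> 's \<Rightarrow> real"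
  assumes "stoch_kernel P" "is_policy pol" "0 \<le> \<gamma>" "\<gamma> < 1"
    and "\<And>x. X x = r x + step_op P \<gamma> pol X x"
  shows "Qfun P r \<gamma> pol = X"
  using Qfun_ge_of_subsolution[OF assms(1-4)] Qfun_le_of_supersolution[OF assms(1-4)] assms(5)
  by (intro ext antisym) (metis order_refl)+

lemma Qfun_bounded:
  fixes P :: "'s::finite \<times> 'a::finite \<Rightarrow> 's \<Rightarrow> real"
  assumes P: "stoch_kernel P" and pol: "is_policy pol" and \<gamma>: "0 \<le> \<gamma>" "\<gamma> < 1"
    and r: "\<forall>sa. 0 \<le> r sa \<and> r sa \<le> 1"
  shows "0 \<le> Qfun P r \<gamma> pol x" "Qfun P r \<gamma> pol x \<le> 1 / (1 - \<gamma>)"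
proof -
  have r_bounds: "0 \<le> r y" "r y \<le> 1" for y
    using r by blast+
  show "0 \<le> Qfun P r \<gamma> pol x"
    using r_bounds by (intro Qfun_ge_of_subsolution[OF P pol \<gamma>]) (simp add: step_op_def Vof_def)
  have "r y + step_op P \<gamma> pol (\<lambda>_. 1 / (1 - \<gamma>)) y \<le> 1 / (1 - \<gamma>)" for y
  proof -
    have "step_op P \<gamma> pol (\<lambda>_. 1 / (1 - \<gamma>)) y \<le> \<gamma> * (1 / (1 - \<gamma>))"
      by (rule step_op_le[OF P pol \<gamma>(1)]) simp
    moreover have "1 + \<gamma> * (1 / (1 - \<gamma>)) = 1 / (1 - \<gamma>)"
      using \<gamma> by (simp add: field_simps)
    ultimately show ?thesis
      using r_bounds(2)[of y] by linarith
  qed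
  then show "Qfun P r \<gamma> pol x \<le> 1 / (1 - \<gamma>)"
    by (rule Qfun_le_of_supersolution[OF P pol \<gamma>])
qed

lemma Vfun_bounded:
  fixes P :: "'s::finite \<times> 'a::finite \<Rightarrow> 's \<Rightarrow> real"
  assumes "stoch_kernel P" "is_policy pol" "0 \<le> \<gamma>" "\<gamma> < 1" "\<forall>sa. 0 \<le> r sa \<and> r sa \<le> 1"
  shows "0 \<le> Vfun P r \<gamma> pol s" "Vfun P r \<gamma> pol s \<le> 1 / (1 - \<gamma>)"
  unfolding Vfun_def using Qfun_bounded[OF assms] assms(2) by (auto intro: Vof_ge Vof_le)

lemma step_op_rank_one_update:
  assumes "\<And>sa s'. Ph sa s' = Pt sa s' + L sa * D s'"
  shows "step_op Ph \<gamma> pol Q sa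
    = \<gamma> * (\<Sum>s'\<in>UNIV. D s' * Vof pol Q s') * L sa + step_op Pt \<gamma> pol Q sa"
  unfolding step_op_def assms by (simp add: sum.distrib sum_distrib_left algebra_simps)

lemma Qfun_rank_one_update:
  fixes Ph :: "'s::finite \<times> 'a::finite \<Rightarrow> 's \<Rightarrow> real"
  assumes Ph: "stoch_kernel Ph" and Pt: "stoch_kernel Pt" and pol: "is_policy pol"
    and \<gamma>: "0 \<le> \<gamma>" "\<gamma> < 1"
    and update: "\<And>sa s'. Ph sa s' = Pt sa s' + L sa * D s'"
  shows "Qfun Ph r \<gamma> pol
    = Qfun Pt (\<lambda>sa. r sa + \<gamma> * (\<Sum>s'\<in>UNIV. D s' * Vfun Ph r \<gamma> pol s') * L sa) \<gamma> pol"
proof (rule Qfun_eq_of_Bellman[OF Pt pol \<gamma>, symmetric])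
  fix x
  show "Qfun Ph r \<gamma> pol x = r x + \<gamma> * (\<Sum>s'\<in>UNIV. D s' * Vfun Ph r \<gamma> pol s') * L x
      + step_op Pt \<gamma> pol (Qfun Ph r \<gamma> pol) x"
    using Qfun_Bellman[OF Ph pol \<gamma>, of r x] step_op_rank_one_update[OF update]
    unfolding Vfun_def by simp
qed

(* Policy improvement: switching to pol wherever it is better for Qfun P r \<gamma> pihat yields a
   policy whose Q-function dominates that of pihat, so optimality of pihat forbids any gain. *)
lemma optimal_policy_greedy:
  fixes P :: "'s::finite \<times> 'a::finite \<Rightarrow> 's \<Rightarrow> real"
  assumes P: "stoch_kernel P" and \<gamma>: "0 \<le> \<gamma>" "\<gamma> < 1"
    and opt: "optimal_policy P r \<gamma> pihat" and pol: "is_policy pol"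
  shows "Vof pol (Qfun P r \<gamma> pihat) s \<le> Vof pihat (Qfun P r \<gamma> pihat) s"
proof -
  let ?Q = "Qfun P r \<gamma> pihat"
  have pihat: "is_policy pihat"
    using opt unfolding optimal_policy_def by blast
  define pol' where "pol' s = (if Vof pihat ?Q s \<le> Vof pol ?Q s then pol s else pihat s)" for s
  have pol': "is_policy pol'"
    using pol pihat unfolding is_policy_def pol'_def by auto
  have Vof_pol': "Vof pol' ?Q s = max (Vof pol ?Q s) (Vof pihat ?Q s)" for s
    unfolding pol'_def by (simp add: Vof_def)
  have "?Q x \<le> Qfun P r \<gamma> pol' x" for x
  proof (rule Qfun_ge_of_subsolution[OF P pol' \<gamma>])
    fix y
    have "step_op P \<gamma> pihat ?Q y \<le> step_op P \<gamma> pol' ?Q y"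
      by (rule step_op_mono[OF P \<gamma>(1)]) (simp add: Vof_pol')
    then show "?Q y \<le> r y + step_op P \<gamma> pol' ?Q y"
      using Qfun_Bellman[OF P pihat \<gamma>, of r y] by simp
  qed
  then have "Vof pol' ?Q s \<le> Vfun P r \<gamma> pol' s"
    unfolding Vfun_def by (rule Vof_mono[OF pol'])
  also have "\<dots> \<le> Vfun P r \<gamma> pihat s"
    using opt pol' unfolding optimal_policy_def by blast
  finally show ?thesis
    unfolding Vof_pol' Vfun_def by simp
qed

lemma Qfun_eq_Qopt_of_greedy:
  fixes P :: "'s::finite \<times> 'a::finite \<Rightarrow> 's \<Rightarrow> real"
  assumes P: "stoch_kernel P" and \<gamma>: "0 \<le> \<gamma>" "\<gamma> < 1" and pihat: "is_policy pihat"
    and greedy: "\<And>pol s. is_policy pol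
      \<Longrightarrow> Vof pol (Qfun P r \<gamma> pihat) s \<le> Vof pihat (Qfun P r \<gamma> pihat) s"
  shows "Qfun P r \<gamma> pihat = Qopt P r \<gamma>"
proof
  fix x
  let ?Q = "Qfun P r \<gamma> pihat"
  have dominates: "Qfun P r \<gamma> pol x \<le> ?Q x" if pol: "is_policy pol" for pol
  proof (rule Qfun_le_of_supersolution[OF P pol \<gamma>])
    fix y
    have "step_op P \<gamma> pol ?Q y \<le> step_op P \<gamma> pihat ?Q y"
      by (rule step_op_mono[OF P \<gamma>(1) greedy[OF pol]])
    then show "r y + step_op P \<gamma> pol ?Q y \<le> ?Q y"
      using Qfun_Bellman[OF P pihat \<gamma>, of r y] by simp
  qed
  show "?Q x = Qopt P r \<gamma> x"
    unfolding Qopt_def using pihat dominates by (intro cSup_eq_maximum[symmetric]) auto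
qed

lemma Qfun_eq_Qopt_rank_one_update:
  fixes Ph :: "'s::finite \<times> 'a::finite \<Rightarrow> 's \<Rightarrow> real"
  assumes Ph: "stoch_kernel Ph" and Pt: "stoch_kernel Pt" and \<gamma>: "0 \<le> \<gamma>" "\<gamma> < 1"
    and update: "\<And>sa s'. Ph sa s' = Pt sa s' + L sa * D s'"
    and opt: "optimal_policy Ph r \<gamma> pihat"
  defines "r' \<equiv> \<lambda>sa. r sa + \<gamma> * (\<Sum>s'\<in>UNIV. D s' * Vfun Ph r \<gamma> pihat s') * L sa"
  shows "Qfun Pt r' \<gamma> pihat = Qopt Pt r' \<gamma>"
proof -
  have pihat: "is_policy pihat"
    using opt unfolding optimal_policy_def by blast
  have "Qfun Ph r \<gamma> pihat = Qfun Pt r' \<gamma> pihat"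
    unfolding r'_def by (rule Qfun_rank_one_update[OF Ph Pt pihat \<gamma> update])
  then show ?thesis
    using optimal_policy_greedy[OF Ph \<gamma> opt] by (intro Qfun_eq_Qopt_of_greedy[OF Pt \<gamma> pihat]) simp
qed

lemma abs_discounted_expectation_diff_le:
  fixes p q V :: "'s::finite \<Rightarrow> real"
  assumes p: "\<And>s. 0 \<le> p s" "(\<Sum>s\<in>UNIV. p s) = 1"
    and q: "\<And>s. 0 \<le> q s" "(\<Sum>s\<in>UNIV. q s) = 1"
    and V: "\<And>s. 0 \<le> V s" "\<And>s. V s \<le> C"
    and \<gamma>: "0 \<le> \<gamma>" "\<gamma> \<le> 1"
  shows "\<bar>\<gamma> * (\<Sum>s\<in>UNIV. (p s - q s) * V s)\<bar> \<le> C"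
proof -
  have "0 \<le> (\<Sum>s\<in>UNIV. p s * V s)" "(\<Sum>s\<in>UNIV. p s * V s) \<le> C"
    "0 \<le> (\<Sum>s\<in>UNIV. q s * V s)" "(\<Sum>s\<in>UNIV. q s * V s) \<le> C"
    using p q V by (auto intro!: weighted_avg_ge weighted_avg_le)
  then have "\<bar>\<Sum>s\<in>UNIV. (p s - q s) * V s\<bar> \<le> C"
    by (simp add: left_diff_distrib sum_subtractf)
  moreover have "\<gamma> * \<bar>\<Sum>s\<in>UNIV. (p s - q s) * V s\<bar> \<le> \<bar>\<Sum>s\<in>UNIV. (p s - q s) * V s\<bar>"
    using \<gamma> by (intro mult_left_le_one_le) auto
  ultimately show ?thesis
    using \<gamma> by (simp add: abs_mult)
qed

lemma interp_kernel_fun_upd: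
  assumes "j < K"
  shows "interp_kernel K lam PK sa s'
    = interp_kernel K lam (PK(j := q)) sa s' + lam sa j * (PK j s' - q s')"
proof -
  have "interp_kernel K lam PK sa s' - interp_kernel K lam (PK(j := q)) sa s'
      = (\<Sum>k<K. if k = j then lam sa j * (PK j s' - q s') else 0)"
    unfolding interp_kernel_def sum_subtractf[symmetric] by (intro sum.cong) (auto simp: algebra_simps)
  then show ?thesis
    using assms by simp
qed

lemma stoch_kernel_interp_kernel:
  assumes PK: "\<And>k s'. k < K \<Longrightarrow> 0 \<le> PK k s'" "\<And>k. k < K \<Longrightarrow> (\<Sum>s'\<in>UNIV. PK k s') = 1"
    and lam: "\<forall>sa k. k < K \<longrightarrow> 0 \<le> lam sa k" "\<forall>sa. (\<Sum>k<K. lam sa k) = 1"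
  shows "stoch_kernel (interp_kernel K lam PK :: 's::finite \<times> 'a::finite \<Rightarrow> 's \<Rightarrow> real)"
  unfolding stoch_kernel_def
proof (intro conjI allI)
  fix sa :: "'s \<times> 'a" and s'
  show "0 \<le> interp_kernel K lam PK sa s'"
    unfolding interp_kernel_def by (intro sum_nonneg mult_nonneg_nonneg) (use PK lam in blast)+
next
  fix sa :: "'s \<times> 'a"
  have "(\<Sum>s'\<in>UNIV. interp_kernel K lam PK sa s') = (\<Sum>k<K. lam sa k * (\<Sum>s'\<in>UNIV. PK k s'))"
    unfolding interp_kernel_def by (simp add: sum.swap[of _ UNIV] sum_distrib_left)
  then show "(\<Sum>s'\<in>UNIV. interp_kernel K lam PK sa s') = 1"
    using PK lam by simp
qed

lemma emp_dist_nonneg: "0 \<le> emp_dist N smp k s'"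
  unfolding emp_dist_def by simp

lemma sum_emp_dist:
  assumes "0 < N"
  shows "(\<Sum>s'\<in>UNIV. emp_dist N smp k (s'::'s::finite)) = 1"
proof -
  have "(\<Sum>s'\<in>UNIV. real (card {i\<in>{..<N}. smp k i = s'}))
      = (\<Sum>s'\<in>UNIV. \<Sum>i<N. if smp k i = s' then 1 else 0)"
    by (simp add: sum.If_cases Int_def conj_commute)
  also have "\<dots> = real N"
    by (subst sum.swap) simp
  finally show ?thesis
    unfolding emp_dist_def using assms by (simp add: sum_divide_distrib[symmetric])
qed

theorem lemma6:
  fixes P :: "'s::finite \<times> 'a::finite \<Rightarrow> 's \<Rightarrow> real"
    and r :: "'s \<times> 'a \<Rightarrow> real"
    and \<gamma> :: real
    and d :: nat and \<phi> :: "'s \<times> 'a \<Rightarrow> nat \<Rightarrow> real" and \<psi> :: "nat \<Rightarrow> 's \<Rightarrow> real"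
    and K :: nat and anchor :: "nat \<Rightarrow> 's \<times> 'a" and lam :: "'s \<times> 'a \<Rightarrow> nat \<Rightarrow> real"
    and N :: nat and smp :: "nat \<Rightarrow> nat \<Rightarrow> 's"
    and j :: nat and s :: 's and a :: 'a
    and pol pihat :: "'s \<Rightarrow> 'a \<Rightarrow> real"
  assumes P_stoch: "stoch_kernel P"
    and r_range: "\<forall>sa. 0 \<le> r sa \<and> r sa \<le> 1"
    and gamma: "0 < \<gamma>" "\<gamma> < 1"
    and linear: "\<forall>sa s'. P sa s' = (\<Sum>i<d. \<phi> sa i * \<psi> i s')"
    and lam_nonneg: "\<forall>sa k. k < K \<longrightarrow> 0 \<le> lam sa k"
    and lam_sum: "\<forall>sa. (\<Sum>k<K. lam sa k) = 1"
    and anchor_comb: "\<forall>sa i. i < d \<longrightarrow> \<phi> sa i = (\<Sum>k<K. lam sa k * \<phi> (anchor k) i)"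
    and N_pos: "0 < N"
    and j: "j < K" "anchor j = (s, a)"
    and pol: "is_policy pol"
    and pihat: "optimal_policy (interp_kernel K lam (emp_dist N smp)) r \<gamma> pihat"
  shows
   "(let PhatK = emp_dist N smp;
         Phat = interp_kernel K lam PhatK;
         Ptil = interp_kernel K lam (PhatK(j := P (s, a)));
         Lam = (\<lambda>sa. lam sa j);
         u_pol = \<gamma> * (\<Sum>s'\<in>UNIV. (PhatK j s' - P (s, a) s') * Vfun Phat r \<gamma> pol s');
         u_st = \<gamma> * (\<Sum>s'\<in>UNIV. (PhatK j s' - P (s, a) s') * Vfun Phat r \<gamma> pihat s');
         r_pol = (\<lambda>sa. r sa + u_pol * Lam sa);
         r_st = (\<lambda>sa. r sa + u_st * Lam sa)
     in Qfun Phat r \<gamma> pol = Qfun Ptil r_pol \<gamma> pol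
      \<and> Qfun Phat r \<gamma> pihat = Qfun Ptil r_st \<gamma> pihat
      \<and> Qfun Ptil r_st \<gamma> pihat = Qopt Ptil r_st \<gamma>
      \<and> - (1 / (1 - \<gamma>)) \<le> u_pol \<and> u_pol \<le> 1 / (1 - \<gamma>)
      \<and> - (1 / (1 - \<gamma>)) \<le> u_st \<and> u_st \<le> 1 / (1 - \<gamma>))"
proof -
  define PK where "PK = emp_dist N smp"
  define Phat :: "'s \<times> 'a \<Rightarrow> 's \<Rightarrow> real" where "Phat = interp_kernel K lam PK"
  define Ptil :: "'s \<times> 'a \<Rightarrow> 's \<Rightarrow> real" where "Ptil = interp_kernel K lam (PK(j := P (s, a)))"
  define u where "u p = \<gamma> * (\<Sum>s'\<in>UNIV. (PK j s' - P (s, a) s') * Vfun Phat r \<gamma> p s')" for p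
  have \<gamma>: "0 \<le> \<gamma>" "\<gamma> < 1"
    using gamma by auto
  have PK: "0 \<le> PK k s'" "(\<Sum>s'\<in>UNIV. PK k s') = 1" for k s'
    unfolding PK_def by (simp_all add: emp_dist_nonneg sum_emp_dist[OF N_pos])
  have stoch: "stoch_kernel Phat" "stoch_kernel Ptil"
    unfolding Phat_def Ptil_def using PK stoch_kernelD[OF P_stoch] lam_nonneg lam_sum
    by (auto intro!: stoch_kernel_interp_kernel)
  have update: "Phat sa s' = Ptil sa s' + lam sa j * (PK j s' - P (s, a) s')" for sa s'
    unfolding Phat_def Ptil_def by (rule interp_kernel_fun_upd[OF j(1)])
  note pihat = pihat[folded PK_def, folded Phat_def]
  have pihat_policy: "is_policy pihat"
    using pihat unfolding optimal_policy_def by blast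
  have Q_update: "Qfun Phat r \<gamma> p = Qfun Ptil (\<lambda>sa. r sa + u p * lam sa j) \<gamma> p"
    if "is_policy p" for p
    unfolding u_def by (rule Qfun_rank_one_update[OF stoch that \<gamma> update])
  have Q_opt: "Qfun Ptil (\<lambda>sa. r sa + u pihat * lam sa j) \<gamma> pihat
      = Qopt Ptil (\<lambda>sa. r sa + u pihat * lam sa j) \<gamma>"
    unfolding u_def by (rule Qfun_eq_Qopt_rank_one_update[OF stoch \<gamma> update pihat])
  have u_abs: "\<bar>u p\<bar> \<le> 1 / (1 - \<gamma>)" if "is_policy p" for p
    unfolding u_def using PK stoch_kernelD[OF P_stoch] Vfun_bounded[OF stoch(1) that \<gamma> r_range] \<gamma>
    by (intro abs_discounted_expectation_diff_le) auto
  show ?thesis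
    using Q_update[OF pol] Q_update[OF pihat_policy] Q_opt u_abs[OF pol] u_abs[OF pihat_policy]
    unfolding Let_def PK_def[symmetric] Phat_def[symmetric] Ptil_def[symmetric] u_def[symmetric]
    by (simp add: abs_le_iff)
qed

end
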